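(* Let $s$ be the number of targeted indices, and suppose each targeted index receives at most $\ell_M$ good insertions. Then the algorithm's total RB cost for good insertions into targeted indices is $O\big(\ell_M^2\sqrt{s\,\mathcal{B}}\big)$, where $\mathcal{B}$ is the adversary's total RB cost.
   Context: Model. A hash table has $t$ indices with chaining. The objects at an index form a list, new objects are appended at the tail, and $L_i$ denotes the current number of objects in the list at index $i$. Under the algorithm \textsc{Depth Charge}, inserting an object at index $i$ costs the inserter an RB (resource-burning) cost of $L_i+1$. Objects inserted by clients are good objects and are placed at uniformly random indices. Objects inserted by the adversary are bad objects and are placed at indices of its choosing. The algorithm's RB cost is the total cost paid by clients, and $\mathcal{B}$ is the total cost paid by the adversary. $\ell_M$ is the maximum, over indices, of the maximum number of good objects ever present in that index. A targeted index is an index containing at least one bad object and at least one good object. *)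

theory Defs
  imports Complex_Main
begin

text \<open>Model of a chained hash table under Depth Charge.  Only the number of good and
bad objects in each list matters for costs, so a state records, for every index and
every kind of object, how many such objects are currently in the list.\<close>

datatype kind = Good | Bad

datatype op = Ins kind nat | Del kind nat

type_synonym state = "nat \<Rightarrow> kind \<Rightarrow> nat"

definition init :: state where "init = (\<lambda>_ _. 0)"

fun step :: "state \<Rightarrow> op \<Rightarrow> state" where
  "step s (Ins k i) = s(i := (s i)(k := s i k + 1))"
| "step s (Del k i) = s(i := (s i)(k := s i k - 1))"

definition st :: "op list \<Rightarrow> nat \<Rightarrow> state" where
  "st ops n = foldl step init (take n ops)"

definition L :: "state \<Rightarrow> nat \<Rightarrow> nat" where
  "L s i = s i Good + s i Bad"

definition valid :: "nat \<Rightarrow> op list \<Rightarrow> bool" where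
  "valid t ops \<longleftrightarrow> (\<forall>n<length ops. case ops ! n of
      Ins k i \<Rightarrow> i < t
    | Del k i \<Rightarrow> i < t \<and> st ops n i k > 0)"

definition adv_cost :: "op list \<Rightarrow> nat" where
  "adv_cost ops = (\<Sum>n<length ops. case ops ! n of
      Ins Bad i \<Rightarrow> L (st ops n) i + 1 | _ \<Rightarrow> 0)"

definition targeted :: "nat \<Rightarrow> op list \<Rightarrow> nat \<Rightarrow> bool" where
  "targeted t ops i \<longleftrightarrow> i < t \<and>
     (\<exists>n\<le>length ops. st ops n i Good \<ge> 1 \<and> st ops n i Bad \<ge> 1)"

definition num_targeted :: "nat \<Rightarrow> op list \<Rightarrow> nat" where
  "num_targeted t ops = card {i. targeted t ops i}"

definition ellM :: "nat \<Rightarrow> op list \<Rightarrow> nat" where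
  "ellM t ops = Max (insert 0 {st ops n i Good | n i. n \<le> length ops \<and> i < t})"

definition good_ins :: "op list \<Rightarrow> nat \<Rightarrow> nat" where
  "good_ins ops i = card {n. n < length ops \<and> ops ! n = Ins Good i}"

definition good_cost_targeted :: "nat \<Rightarrow> op list \<Rightarrow> nat" where
  "good_cost_targeted t ops = (\<Sum>n<length ops. case ops ! n of
      Ins Good i \<Rightarrow> (if targeted t ops i then L (st ops n) i + 1 else 0) | _ \<Rightarrow> 0)"

end

theory Submission
  imports Defs "HOL-Analysis.Convex"
begin

text \<open>Charge every bad insertion at index i only for the bad objects already there.
Since deletions never raise a count, holding b bad objects at i has cost the adversary at
least 1 + 2 + \<dots> + b, so at most about sqrt (2 A_i) bad objects are ever present, where
A_i is the adversary's cost at i.  Hence each good insertion into i costs at most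
\<ell>_M + 1 + sqrt (2 A_i), and there are at most \<ell>_M of them.  On a targeted index
A_i \<ge> 1, so s \<le> \<B>, and Cauchy-Schwarz gives \<Sum> sqrt A_i \<le> sqrt (s \<B>).
None of this uses the validity of the execution.\<close>

lemma sum_sqrt_le_sqrt_card_mult_sum:
  fixes a :: "'i \<Rightarrow> real"
  assumes "\<And>i. i \<in> T \<Longrightarrow> 0 \<le> a i"
  shows "(\<Sum>i\<in>T. sqrt (a i)) \<le> sqrt (card T * sum a T)"
proof -
  have "(\<Sum>i\<in>T. sqrt (a i))\<^sup>2 \<le> (\<Sum>i\<in>T. (sqrt (a i))\<^sup>2) * card T"
    by (rule sum_squared_le_sum_of_squares)
  also have "\<dots> = card T * sum a T"
    using assms by (simp add: mult.commute)
  finally show ?thesis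
    by (simp add: real_le_rsqrt)
qed

lemma sum_le_sq_sqrt_card_mult:
  fixes a g :: "'i \<Rightarrow> real" and B :: real and l :: nat
  assumes a_ge: "\<And>i. i \<in> T \<Longrightarrow> 1 \<le> a i"
    and a_sum: "sum a T \<le> B"
    and g_le: "\<And>i. i \<in> T \<Longrightarrow> g i \<le> real l * (real l + 1 + sqrt 2 * sqrt (a i))"
  shows "sum g T \<le> 4 * (real l)\<^sup>2 * sqrt (card T * B)"
proof -
  have card_le: "card T \<le> B"
    using sum_mono[of T "\<lambda>_. 1::real" a] a_ge a_sum by simp
  have card_le_sqrt: "card T \<le> sqrt (card T * B)"
    using card_le by (intro real_le_rsqrt) (simp add: power2_eq_square mult_left_mono)
  have sqrt_sum: "(\<Sum>i\<in>T. sqrt (a i)) \<le> sqrt (card T * B)"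
  proof -
    have "(\<Sum>i\<in>T. sqrt (a i)) \<le> sqrt (card T * sum a T)"
      using a_ge by (force intro: sum_sqrt_le_sqrt_card_mult_sum)
    also have "\<dots> \<le> sqrt (card T * B)"
      using a_sum by (simp add: mult_left_mono)
    finally show ?thesis .
  qed
  have l_sq: "real l \<le> (real l)\<^sup>2"
    by (cases l) (auto simp: power2_eq_square)
  have sqrt2: "sqrt 2 \<le> (2::real)"
    by (simp add: real_le_lsqrt)
  have "sum g T \<le> (\<Sum>i\<in>T. real l * (real l + 1) + real l * sqrt 2 * sqrt (a i))"
    using g_le by (intro sum_mono) (simp add: algebra_simps)
  also have "\<dots> = card T * (real l * (real l + 1)) + real l * sqrt 2 * (\<Sum>i\<in>T. sqrt (a i))"
    by (simp add: sum.distrib sum_distrib_left)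
  also have "\<dots> \<le> sqrt (card T * B) * (2 * (real l)\<^sup>2) + 2 * (real l)\<^sup>2 * sqrt (card T * B)"
  proof (rule add_mono)
    have "real l * (real l + 1) \<le> 2 * (real l)\<^sup>2"
      using l_sq by (simp add: power2_eq_square algebra_simps)
    then show "card T * (real l * (real l + 1)) \<le> sqrt (card T * B) * (2 * (real l)\<^sup>2)"
      using mult_mono[OF card_le_sqrt] card_le by simp
    have l_sqrt2: "real l * sqrt 2 \<le> 2 * (real l)\<^sup>2"
      using mult_mono[OF l_sq sqrt2] by (simp add: mult.commute)
    show "real l * sqrt 2 * (\<Sum>i\<in>T. sqrt (a i)) \<le> 2 * (real l)\<^sup>2 * sqrt (card T * B)"
      using mult_mono[OF l_sqrt2 sqrt_sum] a_ge by (force intro: sum_nonneg)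
  qed
  finally show ?thesis
    by (simp add: algebra_simps)
qed

lemma st_0: "st ops 0 = init"
  by (simp add: st_def)

lemma st_Suc: "n < length ops \<Longrightarrow> st ops (Suc n) = step (st ops n) (ops ! n)"
  by (simp add: st_def take_Suc_conv_app_nth)

definition adv_cost_at :: "op list \<Rightarrow> nat \<Rightarrow> nat \<Rightarrow> nat" where
  "adv_cost_at ops i m = (\<Sum>n<m. if ops ! n = Ins Bad i then st ops n i Bad + 1 else 0)"

definition good_cost_at :: "op list \<Rightarrow> nat \<Rightarrow> nat" where
  "good_cost_at ops i = (\<Sum>n<length ops. if ops ! n = Ins Good i then L (st ops n) i + 1 else 0)"

lemma adv_cost_at_mono: "m \<le> m' \<Longrightarrow> adv_cost_at ops i m \<le> adv_cost_at ops i m'"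
  unfolding adv_cost_at_def by (rule sum_mono2) auto

lemma bad_count_triangular_le_adv_cost_at:
  "m \<le> length ops \<Longrightarrow> st ops m i Bad * (st ops m i Bad + 1) \<le> 2 * adv_cost_at ops i m"
proof (induction m)
  case 0
  then show ?case
    by (simp add: st_0 init_def adv_cost_at_def)
next
  case (Suc m)
  let ?b = "st ops m i Bad"
  have m: "m < length ops"
    using Suc.prems by simp
  have IH: "?b * (?b + 1) \<le> 2 * adv_cost_at ops i m"
    using Suc m by simp
  have cost_Suc: "adv_cost_at ops i (Suc m)
      = adv_cost_at ops i m + (if ops ! m = Ins Bad i then ?b + 1 else 0)"
    by (simp add: adv_cost_at_def)
  show ?case
  proof (cases "ops ! m = Ins Bad i")
    case True
    then have "st ops (Suc m) i Bad = ?b + 1"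
      using st_Suc[OF m] by simp
    then show ?thesis
      using IH cost_Suc True by (simp add: algebra_simps)
  next
    case False
    then have "st ops (Suc m) i Bad \<le> ?b"
      using st_Suc[OF m] by (cases "ops ! m") auto
    then have "st ops (Suc m) i Bad * (st ops (Suc m) i Bad + 1) \<le> ?b * (?b + 1)"
      by (intro mult_mono) auto
    then show ?thesis
      using IH cost_Suc by simp
  qed
qed

lemma bad_count_le_sqrt_adv_cost_at:
  assumes "n \<le> length ops"
  shows "real (st ops n i Bad) \<le> sqrt 2 * sqrt (adv_cost_at ops i (length ops))"
proof -
  let ?b = "st ops n i Bad"
  have "?b * ?b \<le> 2 * adv_cost_at ops i (length ops)"
    using bad_count_triangular_le_adv_cost_at[OF assms, of i]
      adv_cost_at_mono[OF assms, of ops i] by (meson le_add1 le_trans mult_le_mono2)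
  then have "real (?b * ?b) \<le> real (2 * adv_cost_at ops i (length ops))"
    by (rule of_nat_mono)
  then show ?thesis
    by (simp add: real_le_rsqrt power2_eq_square flip: real_sqrt_mult)
qed

lemma adv_cost_at_ge_1_if_targeted:
  assumes "targeted t ops i"
  shows "1 \<le> adv_cost_at ops i (length ops)"
proof -
  obtain n where n: "n \<le> length ops" "1 \<le> st ops n i Bad"
    using assms unfolding targeted_def by auto
  have "2 \<le> st ops n i Bad * (st ops n i Bad + 1)"
    using mult_le_mono[OF n(2), of 2 "st ops n i Bad + 1"] n(2) by simp
  also have "\<dots> \<le> 2 * adv_cost_at ops i (length ops)"
    using bad_count_triangular_le_adv_cost_at[OF n(1)] adv_cost_at_mono[OF n(1)]
    by (meson order_trans mult_le_mono2)
  finally show ?thesis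
    by simp
qed

lemma sum_adv_cost_at_le_adv_cost:
  assumes "finite I"
  shows "(\<Sum>i\<in>I. adv_cost_at ops i (length ops)) \<le> adv_cost ops"
proof -
  have "(\<Sum>i\<in>I. adv_cost_at ops i (length ops))
      = (\<Sum>n<length ops. \<Sum>i\<in>I. if ops ! n = Ins Bad i then st ops n i Bad + 1 else 0)"
    unfolding adv_cost_at_def by (rule sum.swap)
  also have "\<dots> \<le> adv_cost ops"
    unfolding adv_cost_def
  proof (rule sum_mono)
    fix n
    show "(\<Sum>i\<in>I. if ops ! n = Ins Bad i then st ops n i Bad + 1 else 0)
        \<le> (case ops ! n of Ins Bad i \<Rightarrow> L (st ops n) i + 1 | _ \<Rightarrow> 0)"
      by (auto simp: sum.delta'[OF assms] L_def split: op.split kind.split)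
  qed
  finally show ?thesis .
qed

lemma finite_targeted: "finite {i. targeted t ops i}"
  by (rule finite_subset[of _ "{..<t}"]) (auto simp: targeted_def)

lemma good_cost_targeted_eq_sum_good_cost_at:
  "good_cost_targeted t ops = (\<Sum>i\<in>{i. targeted t ops i}. good_cost_at ops i)"
proof -
  have "good_cost_targeted t ops = (\<Sum>n<length ops. \<Sum>i\<in>{i. targeted t ops i}.
      if ops ! n = Ins Good i then L (st ops n) i + 1 else 0)"
    unfolding good_cost_targeted_def
  proof (rule sum.cong[OF refl])
    fix n
    show "(case ops ! n of Ins Good i \<Rightarrow> if targeted t ops i then L (st ops n) i + 1 else 0
          | _ \<Rightarrow> 0)
        = (\<Sum>i\<in>{i. targeted t ops i}. if ops ! n = Ins Good i then L (st ops n) i + 1 else 0)"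
      by (auto simp: sum.delta'[OF finite_targeted] split: op.split kind.split)
  qed
  also have "\<dots> = (\<Sum>i\<in>{i. targeted t ops i}. good_cost_at ops i)"
    unfolding good_cost_at_def by (rule sum.swap)
  finally show ?thesis .
qed

lemma good_count_le_ellM:
  assumes "n \<le> length ops" "i < t"
  shows "st ops n i Good \<le> ellM t ops"
proof -
  have "{st ops n i Good |n i. n \<le> length ops \<and> i < t}
      = (\<lambda>(n, i). st ops n i Good) ` ({..length ops} \<times> {..<t})"
    by auto
  then have "finite {st ops n i Good |n i. n \<le> length ops \<and> i < t}"
    by simp
  then show ?thesis
    unfolding ellM_def using assms by (intro Max_ge) auto
qed

lemma good_cost_at_le:
  assumes "i < t"
  shows "real (good_cost_at ops i) \<le> real (good_ins ops i)
    * (real (ellM t ops) + 1 + sqrt 2 * sqrt (adv_cost_at ops i (length ops)))"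
    (is "_ \<le> _ * ?K")
proof -
  let ?S = "{n. n < length ops \<and> ops ! n = Ins Good i}"
  have "good_cost_at ops i = (\<Sum>n\<in>?S. L (st ops n) i + 1)"
    unfolding good_cost_at_def by (simp add: sum.inter_filter[symmetric] lessThan_def conj_commute)
  then have "real (good_cost_at ops i) = (\<Sum>n\<in>?S. real (L (st ops n) i + 1))"
    by simp
  also have "\<dots> \<le> real (card ?S) * ?K"
  proof (rule sum_bounded_above)
    fix n
    assume "n \<in> ?S"
    then have "n \<le> length ops"
      by simp
    then show "real (L (st ops n) i + 1) \<le> ?K"
      using good_count_le_ellM[OF _ assms] bad_count_le_sqrt_adv_cost_at
      by (simp add: L_def add_mono)
  qed
  finally show ?thesis
    by (simp add: good_ins_def)
qed

theorem lemma3: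
  "\<exists>C>0. \<forall>t ops. valid t ops \<longrightarrow>
     (\<forall>i. targeted t ops i \<longrightarrow> good_ins ops i \<le> ellM t ops) \<longrightarrow>
     real (good_cost_targeted t ops)
       \<le> C * real (ellM t ops) ^ 2 * sqrt (real (num_targeted t ops) * real (adv_cost ops))"
proof (intro exI[of _ 4] conjI allI impI)
  fix t ops
  assume good_ins_le: "\<forall>i. targeted t ops i \<longrightarrow> good_ins ops i \<le> ellM t ops"
  let ?T = "{i. targeted t ops i}"
  let ?A = "\<lambda>i. real (adv_cost_at ops i (length ops))"
  have "real (good_cost_targeted t ops) = (\<Sum>i\<in>?T. real (good_cost_at ops i))"
    by (simp add: good_cost_targeted_eq_sum_good_cost_at)
  also have "\<dots> \<le> 4 * (real (ellM t ops))\<^sup>2 * sqrt (card ?T * real (adv_cost ops))"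
  proof (rule sum_le_sq_sqrt_card_mult[where a = ?A])
    show "sum ?A ?T \<le> real (adv_cost ops)"
      using sum_adv_cost_at_le_adv_cost[OF finite_targeted] by (metis of_nat_le_iff of_nat_sum)
    fix i
    assume i: "i \<in> ?T"
    then show "1 \<le> ?A i"
      using adv_cost_at_ge_1_if_targeted by simp
    have "i < t"
      using i by (simp add: targeted_def)
    then have "real (good_cost_at ops i)
        \<le> real (good_ins ops i) * (real (ellM t ops) + 1 + sqrt 2 * sqrt (?A i))"
      by (rule good_cost_at_le)
    also have "\<dots> \<le> real (ellM t ops) * (real (ellM t ops) + 1 + sqrt 2 * sqrt (?A i))"
      using good_ins_le i by (intro mult_right_mono) auto
    finally show "real (good_cost_at ops i)
        \<le> real (ellM t ops) * (real (ellM t ops) + 1 + sqrt 2 * sqrt (?A i))" .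
  qed
  finally show "real (good_cost_targeted t ops)
      \<le> 4 * real (ellM t ops) ^ 2 * sqrt (real (num_targeted t ops) * real (adv_cost ops))"
    by (simp add: num_targeted_def)
qed simp

end
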